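(* Let $D$ be a delta-matroid on $[n,\overline{n}]$ with feasible sets $\mathcal{F}$, let $S\in\operatorname{AdS}_n$ with $|S|=n$, and let $r=\max_{B\in\mathcal{F}}|S\cap B|$. Let $M$ be the matroid on $S$ whose set of bases is $\{S\cap B:B\in\mathcal{F},\ |S\cap B|=r\}$. Then for every $T\subseteq S$, $$\operatorname{rk}_M(T)=\frac{g_D(T)+|T|}{2}.$$
   Context: Let $[n,\overline{n}]=\{1,\dots,n,\overline{1},\dots,\overline{n}\}$ with involution $a\mapsto\overline{a}$; $\overline{S}=\{\overline{a}:a\in S\}$. A subset is admissible if it contains at most one of $i,\overline{i}$ for each $i$; $\operatorname{AdS}_n$ is the set of admissible subsets. In $\mathbb{R}^n$ set $e_{\overline{i}}=-e_i$, $e_S=\sum_{a\in S}e_a$. A delta-matroid $D$ on $[n,\overline{n}]$ is a nonempty collection $\mathcal{F}$ of admissible sets of size $n$ (feasible sets) such that $\operatorname{Conv}\{e_B:B\in\mathcal{F}\}$ has all edges parallel to some $e_i$ or $e_i\pm e_j$. Its rank function is $g_D(S)=\max_{B\in\mathcal{F}}(|S\cap B|-|\overline{S}\cap B|)$. (It is a known fact that the collection $\{S\cap B:B\in\mathcal{F},|S\cap B|=r\}$ is the set of bases of a matroid on $S$.) $\operatorname{rk}_M$ denotes the matroid rank function. *)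

theory Defs
  imports "HOL-Analysis.Analysis"
begin

text \<open>The ground set [n, n-bar] is modelled as the type 'n \<times> bool with n = CARD('n):
  (i, True) stands for i and (i, False) for i-bar.\<close>

definition bar :: "'n \<times> bool \<Rightarrow> 'n \<times> bool" where
  "bar a = (fst a, \<not> snd a)"

definition admissible :: "('n \<times> bool) set \<Rightarrow> bool" where
  "admissible S \<longleftrightarrow> (\<forall>i. \<not> ((i, True) \<in> S \<and> (i, False) \<in> S))"

definition evec :: "('n::finite) \<times> bool \<Rightarrow> real ^ 'n" where
  "evec a = (if snd a then axis (fst a) 1 else - axis (fst a) 1)"

definition eset :: "('n::finite \<times> bool) set \<Rightarrow> real ^ 'n" where
  "eset S = (\<Sum>a\<in>S. evec a)"

definition allowed_direction :: "real ^ ('n::finite) \<Rightarrow> bool" where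
  "allowed_direction d \<longleftrightarrow>
     (\<exists>c i. d = c *\<^sub>R axis i 1) \<or>
     (\<exists>c i j. i \<noteq> j \<and> (d = c *\<^sub>R (axis i 1 + axis j 1) \<or> d = c *\<^sub>R (axis i 1 - axis j 1)))"

text \<open>Edges of the polytope: one-dimensional faces, i.e. faces that are nondegenerate segments.\<close>
definition delta_matroid :: "('n::finite \<times> bool) set set \<Rightarrow> bool" where
  "delta_matroid F \<longleftrightarrow>
     F \<noteq> {} \<and>
     (\<forall>B\<in>F. admissible B \<and> card B = CARD('n)) \<and>
     (\<forall>u v. u \<noteq> v \<and> closed_segment u v face_of convex hull (eset ` F)
            \<longrightarrow> allowed_direction (v - u))"

definition delta_rank :: "('n::finite \<times> bool) set set \<Rightarrow> ('n \<times> bool) set \<Rightarrow> int" where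
  "delta_rank F S = Max ((\<lambda>B. int (card (S \<inter> B)) - int (card (bar ` S \<inter> B))) ` F)"

definition matroid_rank :: "'a set set \<Rightarrow> 'a set \<Rightarrow> nat" where
  "matroid_rank Bs T = Max {card I | I. I \<subseteq> T \<and> (\<exists>X\<in>Bs. I \<subseteq> X)}"

end

theory Submission
  imports Defs
begin

text \<open>Let B0 be a feasible set maximising |S \<inter> B| and, among those, |T \<inter> B|. The matroid rank of T
  is the largest |T \<inter> B| over this top layer, while g_D(T) = 2 max |T \<inter> B| - |T| with the maximum over
  all of F, so it suffices that B0 maximises |T \<inter> B| over all of F. If it does not, the simplex
  method on the polytope conv{e_B} started at the vertex e_B0 and directed by e_T finds an edge from
  e_B0 to some e_B1 with |T \<inter> B1| > |T \<inter> B0|. An edge direction e_i \<plusminus> e_j changes at most two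
  coordinates, and the gain on T \<subseteq> S cannot be outweighed on S by the other coordinate, so
  |S \<inter> B1| \<ge> |S \<inter> B0|: B1 lies in the top layer and beats B0.\<close>

lemma polytope_extreme_point_has_edge:
  fixes P :: "'a::euclidean_space set"
  assumes "polytope P" "v extreme_point_of P" "P \<noteq> {v}"
  shows "\<exists>u. u \<noteq> v \<and> closed_segment v u face_of P"
  using assms
proof (induction "nat (aff_dim P)" arbitrary: P rule: less_induct)
  case less
  have "v \<in> P"
    using less.prems(2) extreme_point_of_def by blast
  show ?case
  proof (cases "aff_dim P \<le> 1")
    case True
    then obtain a b where ab: "P = closed_segment a b"
      using compact_convex_collinear_segment \<open>v \<in> P\<close> collinear_aff_dim
        polytope_imp_compact polytope_imp_convex less.prems(1) by (metis empty_iff)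
    then have "v = a \<or> v = b"
      using less.prems(2) extreme_point_of_segment by blast
    then have "P = closed_segment v a \<or> P = closed_segment v b"
      using ab closed_segment_commute by blast
    then show ?thesis
      using less.prems(3) face_of_refl polytope_imp_convex[OF less.prems(1)]
      by (metis closed_segment_idem)
  next
    case False
    have "v \<in> rel_frontier P"
      using \<open>v \<in> P\<close> extreme_point_not_in_REL_INTERIOR less.prems
      by (simp add: rel_frontier_def polytope_imp_closed)
    then obtain F where F: "F facet_of P" "v \<in> F"
      using rel_frontier_of_polyhedron polytope_imp_polyhedron less.prems(1) by blast
    then have "F face_of P" "aff_dim F = aff_dim P - 1"
      by (auto simp: facet_of_def)
    moreover have "polytope F"
      using face_of_polytope_polytope \<open>F face_of P\<close> less.prems(1) by blast
    moreover have "v extreme_point_of F"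
      using extreme_point_of_face \<open>F face_of P\<close> F(2) less.prems(2) by blast
    moreover have "F \<noteq> {v}"
      using \<open>aff_dim F = aff_dim P - 1\<close> False by auto
    moreover have "nat (aff_dim F) < nat (aff_dim P)"
      using \<open>aff_dim F = aff_dim P - 1\<close> False by linarith
    ultimately obtain u where "u \<noteq> v" "closed_segment v u face_of F"
      using less.hyps by blast
    then show ?thesis
      using \<open>F face_of P\<close> face_of_trans by blast
  qed
qed

lemma extreme_point_of_convex_hull_strict_max:
  fixes V :: "'a::euclidean_space set"
  assumes "finite V" "v \<in> V" "\<And>x. x \<in> V \<Longrightarrow> x \<noteq> v \<Longrightarrow> a \<bullet> x < a \<bullet> v"
  shows "v extreme_point_of convex hull V"
proof -
  have "convex hull (V - {v}) \<subseteq> {x. a \<bullet> x < a \<bullet> v}"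
    using assms(3) by (intro hull_minimal convex_halfspace_lt) auto
  then have "v \<notin> convex hull (V - {v})"
    by auto
  then show ?thesis
    using extreme_point_of_convex_hull_insert[of "V - {v}" v] assms(1,2)
    by (simp add: insert_absorb)
qed

text \<open>Tilting the exposing functional a towards c, by the largest amount that keeps v
  maximal on V, makes some point x0 of V with c \<bullet> v < c \<bullet> x0 maximal as well.\<close>
lemma tilted_supporting_functional:
  fixes V :: "'a::real_inner set"
  assumes fin: "finite V" and exposed: "\<And>x. x \<in> V \<Longrightarrow> x \<noteq> v \<Longrightarrow> a \<bullet> x < a \<bullet> v"
    and "w \<in> V" "c \<bullet> v < c \<bullet> w"
  obtains b x0 where "\<And>x. x \<in> V \<Longrightarrow> b \<bullet> x \<le> b \<bullet> v"
    and "\<And>x. x \<in> V \<Longrightarrow> b \<bullet> x = b \<bullet> v \<Longrightarrow> x = v \<or> c \<bullet> v < c \<bullet> x"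
    and "x0 \<in> V" "x0 \<noteq> v" "b \<bullet> x0 = b \<bullet> v"
proof -
  define W where "W = {x \<in> V. c \<bullet> v < c \<bullet> x}"
  define t where "t x = (a \<bullet> v - a \<bullet> x) / (c \<bullet> x - c \<bullet> v)" for x
  have "finite W" "W \<noteq> {}"
    using fin \<open>w \<in> V\<close> \<open>c \<bullet> v < c \<bullet> w\<close> by (auto simp: W_def)
  then obtain x0 where "x0 \<in> W" and x0_min: "\<And>x. x \<in> W \<Longrightarrow> t x0 \<le> t x"
    using ex_min_if_finite[of "t ` W"] by (fastforce simp: not_less)
  have "x0 \<in> V" "c \<bullet> v < c \<bullet> x0"
    using \<open>x0 \<in> W\<close> by (auto simp: W_def)
  then have "x0 \<noteq> v"
    by auto
  have "t x0 > 0"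
    using exposed \<open>x0 \<in> V\<close> \<open>x0 \<noteq> v\<close> \<open>c \<bullet> v < c \<bullet> x0\<close> by (simp add: t_def)
  define b where "b = a + t x0 *\<^sub>R c"
  have b_le: "b \<bullet> x \<le> b \<bullet> v \<and> (b \<bullet> x = b \<bullet> v \<longrightarrow> x = v \<or> c \<bullet> v < c \<bullet> x)"
    if "x \<in> V" for x
  proof (cases "c \<bullet> v < c \<bullet> x")
    case True
    then have "t x0 \<le> (a \<bullet> v - a \<bullet> x) / (c \<bullet> x - c \<bullet> v)"
      using x0_min[of x] that by (simp add: W_def t_def)
    then have "t x0 * (c \<bullet> x - c \<bullet> v) \<le> a \<bullet> v - a \<bullet> x"
      using True by (simp add: le_divide_eq)
    then show ?thesis
      using True by (simp add: b_def inner_add_left algebra_simps)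
  next
    case False
    then have "t x0 * (c \<bullet> x) \<le> t x0 * (c \<bullet> v)"
      using \<open>t x0 > 0\<close> by simp
    then show ?thesis
      using exposed[OF that] by (cases "x = v") (auto simp: b_def inner_add_left)
  qed
  have "t x0 * (c \<bullet> x0 - c \<bullet> v) = a \<bullet> v - a \<bullet> x0"
    using \<open>c \<bullet> v < c \<bullet> x0\<close> by (simp add: t_def)
  then have "b \<bullet> x0 = b \<bullet> v"
    by (simp add: b_def inner_add_left algebra_simps)
  then show ?thesis
    using that[of b x0] b_le \<open>x0 \<in> V\<close> \<open>x0 \<noteq> v\<close> by blast
qed

lemma convex_hull_improving_edge:
  fixes V :: "'a::euclidean_space set"
  assumes fin: "finite V" and "v \<in> V" "\<And>x. x \<in> V \<Longrightarrow> x \<noteq> v \<Longrightarrow> a \<bullet> x < a \<bullet> v"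
    and "w \<in> V" "c \<bullet> v < c \<bullet> w"
  obtains u where "u \<in> V" "u \<noteq> v" "c \<bullet> v < c \<bullet> u" "closed_segment v u face_of convex hull V"
proof -
  obtain b x0 where b_le: "\<And>x. x \<in> V \<Longrightarrow> b \<bullet> x \<le> b \<bullet> v"
    and b_eq: "\<And>x. x \<in> V \<Longrightarrow> b \<bullet> x = b \<bullet> v \<Longrightarrow> x = v \<or> c \<bullet> v < c \<bullet> x"
    and x0: "x0 \<in> V" "x0 \<noteq> v" "b \<bullet> x0 = b \<bullet> v"
    using tilted_supporting_functional[OF fin assms(3-5)] by blast
  define G where "G = convex hull V \<inter> {y. b \<bullet> y = b \<bullet> v}"
  have "convex hull V \<subseteq> {y. b \<bullet> y \<le> b \<bullet> v}"
    using b_le by (intro hull_minimal convex_halfspace_le) auto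
  then have "G face_of convex hull V"
    unfolding G_def by (intro face_of_Int_supporting_hyperplane_le) auto
  moreover have "v \<in> G" "x0 \<in> G"
    using \<open>v \<in> V\<close> x0 by (auto simp: G_def hull_inc)
  ultimately have "polytope G" "v extreme_point_of G" "G \<noteq> {v}"
    using face_of_polytope_polytope[OF polytope_convex_hull[OF fin]] x0(2)
      extreme_point_of_face extreme_point_of_convex_hull_strict_max[OF assms(1-3)]
    by auto
  then obtain u where "u \<noteq> v" "closed_segment v u face_of G"
    using polytope_extreme_point_has_edge by blast
  then have edge: "closed_segment v u face_of convex hull V"
    using \<open>G face_of convex hull V\<close> face_of_trans by blast
  then have "u \<in> V"
    using segment_face_of(2) extreme_point_of_convex_hull by blast
  moreover have "u \<in> G"
    using \<open>closed_segment v u face_of G\<close> face_of_imp_subset by fastforce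
  ultimately show ?thesis
    using that \<open>u \<noteq> v\<close> edge b_eq by (auto simp: G_def)
qed

lemma inner_lt_inner_self:
  fixes x v :: "'a::real_inner"
  assumes "x \<bullet> x = v \<bullet> v" "x \<noteq> v"
  shows "v \<bullet> x < v \<bullet> v"
proof -
  have "0 < (x - v) \<bullet> (x - v)"
    using assms(2) by simp
  also have "\<dots> = 2 * (v \<bullet> v - v \<bullet> x)"
    using assms(1) by (simp add: inner_diff inner_commute)
  finally show ?thesis
    by simp
qed

definition transversal :: "('n \<times> bool) set \<Rightarrow> bool" where
  "transversal B \<longleftrightarrow> (\<forall>i. (i, False) \<in> B \<longleftrightarrow> (i, True) \<notin> B)"

lemma transversal_mem_iff: "transversal B \<Longrightarrow> (i, b) \<in> B \<longleftrightarrow> b = ((i, True) \<in> B)"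
  by (cases b) (auto simp: transversal_def)

lemma admissible_card_imp_transversal:
  fixes B :: "('n::finite \<times> bool) set"
  assumes adm: "admissible B" and card: "card B = CARD('n)"
  shows "transversal B"
proof -
  have "(i, True) \<in> B \<longleftrightarrow> (i, False) \<notin> B" for i
  proof -
    have "inj_on fst B"
      using adm unfolding admissible_def inj_on_def by (metis (full_types) prod.collapse)
    then have "card (fst ` B) = CARD('n)"
      using card by (simp add: card_image)
    then have "fst ` B = UNIV"
      by (simp add: card_eq_UNIV_imp_eq_UNIV)
    then obtain b where "(i, b) \<in> B"
      by (metis UNIV_I imageE prod.collapse)
    then show ?thesis
      using adm unfolding admissible_def by (cases b) auto
  qed
  then show ?thesis
    unfolding transversal_def by blast
qed

lemma delta_matroid_transversal: "delta_matroid F \<Longrightarrow> B \<in> F \<Longrightarrow> transversal B"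
  unfolding delta_matroid_def using admissible_card_imp_transversal by blast

definition bool_sign :: "bool \<Rightarrow> real" where
  "bool_sign b = (if b then 1 else -1)"

lemma evec_nth: "evec a $ k = (if fst a = k then bool_sign (snd a) else 0)"
  unfolding evec_def bool_sign_def axis_def by auto

lemma eset_nth_subset:
  assumes "transversal S" "X \<subseteq> S"
  shows "eset X $ k = (if (k, (k, True) \<in> S) \<in> X then bool_sign ((k, True) \<in> S) else 0)"
proof -
  define s where "s = (k, (k, True) \<in> S)"
  have "evec a $ k = (if a = s then bool_sign (snd s) else 0)" if "a \<in> X" for a
  proof -
    have "snd a = ((fst a, True) \<in> S)"
      using transversal_mem_iff[OF assms(1), of "fst a" "snd a"] that assms(2) by auto
    then show ?thesis
      by (cases a) (auto simp: evec_nth s_def)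
  qed
  then have "eset X $ k = (\<Sum>a\<in>X. if a = s then bool_sign (snd s) else 0)"
    unfolding eset_def by simp
  then show ?thesis
    by (simp add: s_def)
qed

lemma eset_transversal_nth:
  assumes "transversal B"
  shows "eset B $ k = bool_sign ((k, True) \<in> B)"
proof -
  have "(k, (k, True) \<in> B) \<in> B"
    using transversal_mem_iff[OF assms, of k "(k, True) \<in> B"] by blast
  then show ?thesis
    using eset_nth_subset[OF assms subset_refl, of k] by simp
qed

lemma inner_eset_transversal:
  fixes X B :: "('n::finite \<times> bool) set"
  assumes "transversal B"
  shows "eset X \<bullet> eset B = 2 * real (card (X \<inter> B)) - real (card X)"
proof -
  have "evec a \<bullet> eset B = (if a \<in> B then 1 else -1)" for a
  proof -
    have "evec a \<bullet> eset B = bool_sign (snd a) * bool_sign ((fst a, True) \<in> B)"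
      using assms by (simp add: evec_def inner_axis' eset_transversal_nth bool_sign_def)
    moreover have "a \<in> B \<longleftrightarrow> snd a = ((fst a, True) \<in> B)"
      using transversal_mem_iff[OF assms, of "fst a" "snd a"] by simp
    ultimately show ?thesis
      by (simp add: bool_sign_def)
  qed
  then have "eset X \<bullet> eset B = real (card (X \<inter> B)) - real (card (X - B))"
    by (simp add: eset_def inner_sum_left sum.If_cases Diff_eq)
  moreover have "card X = card (X \<inter> B) + card (X - B)"
    by (intro card_Int_Diff) simp
  ultimately show ?thesis
    by simp
qed

lemma card_bar_image_Int:
  fixes T B :: "('n \<times> bool) set"
  assumes "transversal B" "finite T"
  shows "card (bar ` T \<inter> B) + card (T \<inter> B) = card T"
proof -
  have "bar a \<in> B \<longleftrightarrow> a \<notin> B" for a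
    using assms(1) by (cases a; cases "snd a") (auto simp: transversal_def bar_def)
  then have "bar ` T \<inter> B = bar ` (T - B)"
    by auto
  moreover have "inj_on bar (T - B)"
    by (rule inj_onI) (auto simp: bar_def prod_eq_iff)
  ultimately have "card (bar ` T \<inter> B) = card (T - B)"
    by (simp add: card_image)
  then show ?thesis
    using card_Int_Diff[OF assms(2), of B] by simp
qed

lemma delta_rank_transversals:
  fixes F :: "('n::finite \<times> bool) set set"
  assumes "F \<noteq> {}" "\<And>B. B \<in> F \<Longrightarrow> transversal B"
  shows "delta_rank F T = 2 * int (Max ((\<lambda>B. card (T \<inter> B)) ` F)) - int (card T)"
proof -
  define f where "f m = 2 * int m - int (card T)" for m
  have term_eq: "int (card (T \<inter> B)) - int (card (bar ` T \<inter> B)) = f (card (T \<inter> B))"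
    if "B \<in> F" for B
    using card_bar_image_Int[OF assms(2)[OF that], of T] by (simp add: f_def)
  have "delta_rank F T = Max (f ` (\<lambda>B. card (T \<inter> B)) ` F)"
    unfolding delta_rank_def image_image by (simp add: term_eq cong: image_cong)
  also have "\<dots> = f (Max ((\<lambda>B. card (T \<inter> B)) ` F))"
    using assms(1) by (intro mono_Max_commute[symmetric]) (auto simp: f_def mono_def)
  finally show ?thesis
    by (simp add: f_def)
qed

lemma finite_lex_max:
  fixes f g :: "'a \<Rightarrow> nat"
  assumes "finite A" "A \<noteq> {}"
  shows "\<exists>a\<in>A. (\<forall>x\<in>A. f x \<le> f a) \<and> (\<forall>x\<in>A. f x = f a \<longrightarrow> g x \<le> g a)"
proof -
  define A' where "A' = {x \<in> A. f x = Max (f ` A)}"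
  have "Max (f ` A) \<in> f ` A"
    using assms by (intro Max_in) auto
  then have "A' \<noteq> {}" "finite A'"
    using assms(1) by (auto simp: A'_def)
  then have "Max (g ` A') \<in> g ` A'"
    by (intro Max_in) auto
  then obtain a where "a \<in> A'" "g a = Max (g ` A')"
    by force
  moreover have "f x \<le> f a" if "x \<in> A" for x
    using \<open>a \<in> A'\<close> that assms(1) by (simp add: A'_def)
  moreover have "g x \<le> g a" if "x \<in> A" "f x = f a" for x
    using \<open>a \<in> A'\<close> \<open>g a = Max (g ` A')\<close> \<open>finite A'\<close> that by (simp add: A'_def)
  ultimately show ?thesis
    using A'_def by blast
qed

lemma matroid_rank_eq_Max_card_Int:
  fixes Bs :: "'a set set"
  assumes "finite T" "finite Bs" "Bs \<noteq> {}"
  shows "matroid_rank Bs T = Max ((\<lambda>X. card (T \<inter> X)) ` Bs)"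
  unfolding matroid_rank_def
proof (rule Max_eqI)
  have "{card I | I. I \<subseteq> T \<and> (\<exists>X\<in>Bs. I \<subseteq> X)} \<subseteq> card ` Pow T"
    by blast
  then show "finite {card I | I. I \<subseteq> T \<and> (\<exists>X\<in>Bs. I \<subseteq> X)}"
    by (rule finite_surj[rotated]) (simp add: assms(1))
next
  fix y assume "y \<in> {card I | I. I \<subseteq> T \<and> (\<exists>X\<in>Bs. I \<subseteq> X)}"
  then obtain I X where "y = card I" "I \<subseteq> T \<inter> X" "X \<in> Bs"
    by blast
  then have "y \<le> card (T \<inter> X)"
    using assms(1) by (simp add: card_mono)
  also have "\<dots> \<le> Max ((\<lambda>X. card (T \<inter> X)) ` Bs)"
    using \<open>X \<in> Bs\<close> assms(2) by simp
  finally show "y \<le> Max ((\<lambda>X. card (T \<inter> X)) ` Bs)" .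
next
  have "Max ((\<lambda>X. card (T \<inter> X)) ` Bs) \<in> (\<lambda>X. card (T \<inter> X)) ` Bs"
    using assms(2,3) by (intro Max_in) auto
  then obtain X where "X \<in> Bs" "Max ((\<lambda>X. card (T \<inter> X)) ` Bs) = card (T \<inter> X)"
    by blast
  then show "Max ((\<lambda>X. card (T \<inter> X)) ` Bs) \<in> {card I | I. I \<subseteq> T \<and> (\<exists>X\<in>Bs. I \<subseteq> X)}"
    by (auto intro!: exI[of _ "T \<inter> X"])
qed

lemma allowed_direction_support:
  fixes d :: "real ^ 'n::finite"
  assumes "allowed_direction d"
  obtains i j where "\<And>k. k \<noteq> i \<Longrightarrow> k \<noteq> j \<Longrightarrow> d $ k = 0"
proof -
  from assms consider (single) c i where "d = c *\<^sub>R axis i 1"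
    | (pair) c i j where "d = c *\<^sub>R (axis i 1 + axis j 1) \<or> d = c *\<^sub>R (axis i 1 - axis j 1)"
    unfolding allowed_direction_def by blast
  then show thesis
  proof cases
    case single
    then show thesis
      by (intro that[of i i]) (simp add: axis_def)
  next
    case pair
    then show thesis
      by (intro that[of i j]) (auto simp: axis_def)
  qed
qed

text \<open>Only two coordinates contribute to either inner product, each term of s \<bullet> d is -2, 0 or 2,
  and t \<bullet> d keeps just the terms in I: a positive t \<bullet> d forces a term 2, which the other term
  cannot outweigh.\<close>
lemma allowed_direction_inner_nonneg:
  fixes d s t :: "real ^ 'n::finite"
  assumes "allowed_direction d" and terms: "\<And>k. s $ k * d $ k \<in> {-2, 0, 2}"
    and t: "\<And>k. t $ k = (if k \<in> I then s $ k else 0)" and "0 < t \<bullet> d"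
  shows "0 \<le> s \<bullet> d"
proof -
  obtain i j where supp: "\<And>k. k \<noteq> i \<Longrightarrow> k \<noteq> j \<Longrightarrow> d $ k = 0"
    using allowed_direction_support[OF assms(1)] by blast
  define q where "q k = s $ k * d $ k" for k
  have s_d: "s \<bullet> d = (\<Sum>k\<in>{i, j}. q k)"
    unfolding inner_vec_def q_def inner_real_def using supp
    by (intro sum.mono_neutral_right) auto
  have "t \<bullet> d = (\<Sum>k\<in>UNIV. if k \<in> I then q k else 0)"
    unfolding inner_vec_def inner_real_def q_def t by (intro sum.cong) auto
  also have "\<dots> = (\<Sum>k\<in>{i, j}. if k \<in> I then q k else 0)"
    using supp by (intro sum.mono_neutral_right) (auto simp: q_def)
  finally have t_d: "t \<bullet> d = (\<Sum>k\<in>{i, j}. if k \<in> I then q k else 0)" .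
  show ?thesis
  proof (cases "i = j")
    case True
    then have "{i, j} = {j}"
      by simp
    then show ?thesis
      using s_d t_d \<open>0 < t \<bullet> d\<close> terms[of j] unfolding q_def[symmetric] \<open>{i, j} = {j}\<close>
      by (auto split: if_splits)
  next
    case False
    then show ?thesis
      using s_d t_d \<open>0 < t \<bullet> d\<close> terms[of i] terms[of j] unfolding q_def[symmetric]
      by (auto split: if_splits)
  qed
qed

lemma transversal_edge_card_mono:
  fixes S T B0 B1 :: "('n::finite \<times> bool) set"
  assumes S: "transversal S" "T \<subseteq> S" and B: "transversal B0" "transversal B1"
    and "allowed_direction (eset B1 - eset B0)" "card (T \<inter> B0) < card (T \<inter> B1)"
  shows "card (S \<inter> B0) \<le> card (S \<inter> B1)"
proof -
  define d where "d = eset B1 - eset B0"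
  have "eset S $ k * d $ k \<in> {-2, 0, 2}" for k
    using S(1) B by (simp add: d_def eset_transversal_nth bool_sign_def)
  moreover have "eset T $ k = (if k \<in> {k. (k, (k, True) \<in> S) \<in> T} then eset S $ k else 0)" for k
    using eset_nth_subset[OF S] eset_transversal_nth[OF S(1)] by simp
  moreover have "0 < eset T \<bullet> d"
    using assms(6) by (simp add: d_def inner_diff_right inner_eset_transversal B)
  ultimately have "0 \<le> eset S \<bullet> d"
    using allowed_direction_inner_nonneg assms(5) unfolding d_def by blast
  then show ?thesis
    by (simp add: d_def inner_diff_right inner_eset_transversal B)
qed

lemma delta_matroid_lex_max_is_max:
  fixes F :: "('n::finite \<times> bool) set set"
  assumes F: "delta_matroid F" and S: "transversal S" "T \<subseteq> S" and "B0 \<in> F"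
    and S_max: "\<And>B. B \<in> F \<Longrightarrow> card (S \<inter> B) \<le> card (S \<inter> B0)"
    and T_max: "\<And>B. B \<in> F \<Longrightarrow> card (S \<inter> B) = card (S \<inter> B0) \<Longrightarrow> card (T \<inter> B) \<le> card (T \<inter> B0)"
    and "B \<in> F"
  shows "card (T \<inter> B) \<le> card (T \<inter> B0)"
proof (rule ccontr)
  assume not_max: "\<not> card (T \<inter> B) \<le> card (T \<inter> B0)"
  have feasible: "transversal B'" if "B' \<in> F" for B'
    using delta_matroid_transversal[OF F that] .
  have T_less: "eset T \<bullet> eset B0 < eset T \<bullet> eset B"
    using not_max \<open>B0 \<in> F\<close> \<open>B \<in> F\<close> by (simp add: inner_eset_transversal feasible)
  have exposed: "eset B0 \<bullet> x < eset B0 \<bullet> eset B0" if "x \<in> eset ` F" "x \<noteq> eset B0" for x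
  proof (rule inner_lt_inner_self[OF _ \<open>x \<noteq> eset B0\<close>])
    show "x \<bullet> x = eset B0 \<bullet> eset B0"
      using that F \<open>B0 \<in> F\<close> unfolding delta_matroid_def
      by (auto simp: inner_eset_transversal feasible)
  qed
  have "finite (eset ` F)" "eset B0 \<in> eset ` F" "eset B \<in> eset ` F"
    using \<open>B0 \<in> F\<close> \<open>B \<in> F\<close> by auto
  then obtain u where "u \<in> eset ` F" "u \<noteq> eset B0" "eset T \<bullet> eset B0 < eset T \<bullet> u"
      and edge: "closed_segment (eset B0) u face_of convex hull (eset ` F)"
    using convex_hull_improving_edge[OF _ _ exposed _ T_less] by blast
  then obtain B1 where "B1 \<in> F" "u = eset B1"
    by blast
  have "allowed_direction (eset B1 - eset B0)"
    using F edge \<open>u \<noteq> eset B0\<close> unfolding delta_matroid_def \<open>u = eset B1\<close>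
    by (auto simp: eq_commute[of "eset B1"])
  moreover have "card (T \<inter> B0) < card (T \<inter> B1)"
    using \<open>eset T \<bullet> eset B0 < eset T \<bullet> u\<close> F \<open>B0 \<in> F\<close> \<open>B1 \<in> F\<close> unfolding \<open>u = eset B1\<close>
    by (simp add: inner_eset_transversal feasible)
  ultimately have "card (S \<inter> B0) \<le> card (S \<inter> B1)"
    using transversal_edge_card_mono[OF S feasible feasible] \<open>B0 \<in> F\<close> \<open>B1 \<in> F\<close> by blast
  then have "card (S \<inter> B1) = card (S \<inter> B0)"
    using S_max[OF \<open>B1 \<in> F\<close>] by simp
  then show False
    using T_max[OF \<open>B1 \<in> F\<close>] \<open>card (T \<inter> B0) < card (T \<inter> B1)\<close> by simp
qed

theorem proposition2p8:
  fixes F :: "('n::finite \<times> bool) set set" and S T :: "('n \<times> bool) set"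
  assumes "delta_matroid F"
    and "admissible S" and "card S = CARD('n)"
    and "T \<subseteq> S"
  shows "let r = Max ((\<lambda>B. card (S \<inter> B)) ` F);
             Bs = {S \<inter> B | B. B \<in> F \<and> card (S \<inter> B) = r}
         in real (matroid_rank Bs T) = (real_of_int (delta_rank F T) + real (card T)) / 2"
proof -
  have "F \<noteq> {}" and feasible: "\<And>B. B \<in> F \<Longrightarrow> transversal B"
    using assms(1) delta_matroid_transversal by (auto simp: delta_matroid_def)
  obtain B0 where "B0 \<in> F" and S_max: "\<And>B. B \<in> F \<Longrightarrow> card (S \<inter> B) \<le> card (S \<inter> B0)"
    and T_max: "\<And>B. B \<in> F \<Longrightarrow> card (S \<inter> B) = card (S \<inter> B0) \<Longrightarrow> card (T \<inter> B) \<le> card (T \<inter> B0)"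
    using finite_lex_max[OF finite \<open>F \<noteq> {}\<close>, of "\<lambda>B. card (S \<inter> B)" "\<lambda>B. card (T \<inter> B)"]
    by blast
  define Fr where "Fr = {B \<in> F. card (S \<inter> B) = card (S \<inter> B0)}"
  have r: "Max ((\<lambda>B. card (S \<inter> B)) ` F) = card (S \<inter> B0)"
    by (rule Max_eqI) (use \<open>B0 \<in> F\<close> S_max in auto)
  have T_max_all: "card (T \<inter> B) \<le> card (T \<inter> B0)" if "B \<in> F" for B
    using delta_matroid_lex_max_is_max[OF assms(1) admissible_card_imp_transversal[OF assms(2,3)]
        assms(4) \<open>B0 \<in> F\<close> S_max T_max that] .
  have "Max ((\<lambda>B. card (T \<inter> B)) ` F) = card (T \<inter> B0)"
    by (rule Max_eqI) (use \<open>B0 \<in> F\<close> T_max_all in auto)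
  then have "delta_rank F T = 2 * int (card (T \<inter> B0)) - int (card T)"
    using delta_rank_transversals[OF \<open>F \<noteq> {}\<close> feasible] by simp
  moreover have "Max ((\<lambda>B. card (T \<inter> B)) ` Fr) = card (T \<inter> B0)"
    by (rule Max_eqI) (use \<open>B0 \<in> F\<close> T_max in \<open>auto simp: Fr_def\<close>)
  then have "matroid_rank ((\<inter>) S ` Fr) T = card (T \<inter> B0)"
    using matroid_rank_eq_Max_card_Int[of T "(\<inter>) S ` Fr"] \<open>B0 \<in> F\<close> assms(4)
    by (auto simp: Fr_def image_image Int_assoc[symmetric] Int_absorb2)
  moreover have "{S \<inter> B | B. B \<in> F \<and> card (S \<inter> B) = card (S \<inter> B0)} = (\<inter>) S ` Fr"
    by (auto simp: Fr_def)
  ultimately show ?thesis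
    using card_mono[OF _ assms(4)] by (simp add: Let_def r)
qed

end
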